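(* A random finite rooted ordered Family Tree $[\mathbf{T},\mathbf{o}]$ has the distribution $TGWT(\pi)$ for some distribution $\pi$ on $\{0,1,2,\dots\}$ with mean $m(\pi)<1$ if and only if (1) $[\mathbf{T},\mathbf{o}]$ is unimodular, and (2) the number of children $d_1(\mathbf{o})$ of the root is independent of the non-descendant tree of the root.
   Context: A Family Tree is a locally finite directed tree in which every vertex has out-degree at most one (edges from child to parent); ordered means children of each vertex are totally ordered. The non-descendant tree of $\mathbf{o}$ is the subtree induced by $(V(\mathbf{T})\setminus D(\mathbf{o}))\cup\{\mathbf{o}\}$, where $D(\mathbf{o})$ is $\mathbf{o}$ together with all vertices having a directed path to $\mathbf{o}$. Unimodular: $\mathbb{E}[\sum_{u}h([\mathbf{T},\mathbf{o},u])]=\mathbb{E}[\sum_u h([\mathbf{T},u,\mathbf{o}])]$ for every measurable $h\ge0$ on doubly rooted isomorphism classes. $TGWT(\pi)$: with $\hat\pi(k)=k\pi(k)/m(\pi)$, the random rooted ordered Family Tree in which (i) the root has a parent with probability $m(\pi)$, and independently each ancestor in turn has a parent with probability $m(\pi)$; (ii) each ancestor of the root independently receives $Z-1$ additional children with $Z\sim\hat\pi$, and the children of each ancestor are ordered uniformly at random; (iii) independent ordered Galton-Watson trees with offspring distribution $\pi$ are attached as descendant trees to the root and to each additional child. *)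

theory Defs
  imports "HOL-Probability.Probability"
begin

text \<open>A finite ordered Family Tree has a unique parentless vertex (the top);
  up to order-preserving isomorphism it is a plane tree.  Order-preserving
  isomorphisms of plane trees are unique, so an isomorphism class of a rooted
  (resp. doubly rooted) finite ordered Family Tree is canonically a plane tree
  together with the address (path of child indices from the top) of the root
  (resp. of both roots).\<close>

datatype ptree = Node "ptree list"

fun children :: "ptree \<Rightarrow> ptree list" where
  "children (Node ts) = ts"

fun valid_addr :: "ptree \<Rightarrow> nat list \<Rightarrow> bool" where
  "valid_addr t [] = True"
| "valid_addr (Node ts) (i # a) = (i < length ts \<and> valid_addr (ts ! i) a)"

definition addrs :: "ptree \<Rightarrow> nat list set" where
  "addrs t = {a. valid_addr t a}"

fun subtree :: "ptree \<Rightarrow> nat list \<Rightarrow> ptree" where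
  "subtree t [] = t"
| "subtree (Node ts) (i # a) = subtree (ts ! i) a"

fun graft :: "ptree \<Rightarrow> nat list \<Rightarrow> ptree \<Rightarrow> ptree" where
  "graft t [] s = s"
| "graft (Node ts) (i # a) s = Node (ts[i := graft (ts ! i) a s])"

type_synonym rtree = "ptree \<times> nat list"

definition valid_rtree :: "rtree \<Rightarrow> bool" where
  "valid_rtree x = valid_addr (fst x) (snd x)"

definition root_degree :: "rtree \<Rightarrow> nat" where
  "root_degree x = length (children (subtree (fst x) (snd x)))"

definition nondesc_tree :: "rtree \<Rightarrow> rtree" where
  "nondesc_tree x = (graft (fst x) (snd x) (Node []), snd x)"

definition indep_rv :: "'a pmf \<Rightarrow> ('a \<Rightarrow> 'b) \<Rightarrow> ('a \<Rightarrow> 'c) \<Rightarrow> bool" where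
  "indep_rv P f g \<longleftrightarrow>
     (\<forall>A B. measure_pmf.prob P {x. f x \<in> A \<and> g x \<in> B}
            = measure_pmf.prob P {x. f x \<in> A} * measure_pmf.prob P {x. g x \<in> B})"

definition unimodular :: "rtree pmf \<Rightarrow> bool" where
  "unimodular P \<longleftrightarrow>
     (\<forall>h :: ptree \<Rightarrow> nat list \<Rightarrow> nat list \<Rightarrow> ennreal.
        (\<integral>\<^sup>+x. (\<Sum>u\<in>addrs (fst x). h (fst x) (snd x) u) \<partial>measure_pmf P)
      = (\<integral>\<^sup>+x. (\<Sum>u\<in>addrs (fst x). h (fst x) u (snd x)) \<partial>measure_pmf P))"

definition mean_enn :: "nat pmf \<Rightarrow> ennreal" where
  "mean_enn \<pi> = (\<integral>\<^sup>+k. ennreal (real k) \<partial>measure_pmf \<pi>)"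

definition mean :: "nat pmf \<Rightarrow> real" where
  "mean \<pi> = enn2real (mean_enn \<pi>)"

text \<open>size-biased distribution \<open>\<pi>\<close>-hat (meaningful when mean > 0)\<close>
definition size_biased :: "nat pmf \<Rightarrow> nat pmf" where
  "size_biased \<pi> = embed_pmf (\<lambda>k. real k * pmf \<pi> k / mean \<pi>)"

partial_function (spmf) gw_forest :: "nat pmf \<Rightarrow> nat \<Rightarrow> ptree list spmf" where
  "gw_forest \<pi> k =
     (if k = 0 then return_spmf []
      else bind_spmf (spmf_of_pmf \<pi>) (\<lambda>j.
             bind_spmf (gw_forest \<pi> j) (\<lambda>cs.
             bind_spmf (gw_forest \<pi> (k - 1)) (\<lambda>rest.
             return_spmf (Node cs # rest)))))"

definition gw :: "nat pmf \<Rightarrow> ptree spmf" where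
  "gw \<pi> = map_spmf hd (gw_forest \<pi> 1)"

definition add_parent :: "nat pmf \<Rightarrow> rtree \<Rightarrow> rtree spmf" where
  "add_parent \<pi> x =
     bind_spmf (spmf_of_pmf (size_biased \<pi>)) (\<lambda>z.
     bind_spmf (spmf_of_pmf (pmf_of_set {..<z})) (\<lambda>i.
     bind_spmf (gw_forest \<pi> i) (\<lambda>before.
     bind_spmf (gw_forest \<pi> (z - 1 - i)) (\<lambda>after.
     return_spmf (Node (before @ [fst x] @ after), i # snd x)))))"

partial_function (spmf) ancestral_line :: "nat pmf \<Rightarrow> rtree \<Rightarrow> rtree spmf" where
  "ancestral_line \<pi> x =
     bind_spmf (spmf_of_pmf (bernoulli_pmf (mean \<pi>))) (\<lambda>b.
       if b then bind_spmf (add_parent \<pi> x) (\<lambda>y. ancestral_line \<pi> y)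
       else return_spmf x)"

definition TGWT :: "nat pmf \<Rightarrow> rtree spmf" where
  "TGWT \<pi> = bind_spmf (gw \<pi>) (\<lambda>t. ancestral_line \<pi> (t, []))"

end

theory Submission
  imports Defs
begin

text \<open>
  Both conditions are read off the probability mass function.  Unimodularity of a law on
  finite rooted trees says exactly that the mass of \<open>(t, o)\<close> depends on \<open>t\<close> only (transport
  a unit mass from \<open>(t, a)\<close> to \<open>(t, b)\<close>).  Under \<open>TGWT(\<pi>)\<close> the mass of \<open>(t, o)\<close> is
  \<open>(1 - m(\<pi>))\<close> times the Galton-Watson weight \<open>W(t)\<close>, the product of \<open>\<pi>(number of children)\<close>
  over all vertices: each ancestor costs a factor \<open>m(\<pi>)\<close>, which cancels against the
  size-biasing and the uniform position among its children.  This weight is a function of the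
  non-descendant tree times \<open>W\<close> of the descendant tree, whence the independence.

  Conversely, let the mass be \<open>q(t)\<close> and let \<open>d\<^sub>1(o)\<close> be independent of the non-descendant
  tree \<open>n\<close>; let \<open>\<pi>\<close> be the law of \<open>d\<^sub>1(o)\<close>.  Moving the root to a child of \<open>o\<close> does not
  change \<open>q\<close>, so induction on the descendant tree \<open>d\<close>, one child at a time, gives
  \<open>q(n with d grafted at o) = W(d) P(non-descendant tree = n)\<close>.  For the one-vertex \<open>n\<close> this
  reads \<open>q = c W\<close> with \<open>c = P(o is the top)\<close>, and counting vertices (every vertex but the top is
  a child) gives \<open>m(\<pi>) + c = 1\<close>; hence \<open>m(\<pi>) < 1\<close> and \<open>c = 1 - m(\<pi>)\<close>.
\<close>

section \<open>Addresses, subtrees and grafting\<close>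

lemma valid_addr_append: "valid_addr t (a @ b) \<longleftrightarrow> valid_addr t a \<and> valid_addr (subtree t a) b"
  by (induction t a rule: valid_addr.induct) auto

lemma subtree_append: "subtree t (a @ b) = subtree (subtree t a) b"
  by (induction t a rule: subtree.induct) auto

lemma valid_addr_snoc:
  "valid_addr t (a @ [i]) \<longleftrightarrow> valid_addr t a \<and> i < length (children (subtree t a))"
  by (cases "subtree t a") (simp add: valid_addr_append)

lemma graft_subtree: "valid_addr t a \<Longrightarrow> graft t a (subtree t a) = t"
  by (induction t a rule: valid_addr.induct) auto

lemma subtree_graft: "valid_addr t a \<Longrightarrow> subtree (graft t a s) a = s"
  by (induction t a arbitrary: s rule: valid_addr.induct) auto

lemma valid_addr_graft_append:
  "valid_addr t a \<Longrightarrow> valid_addr (graft t a s) (a @ b) \<longleftrightarrow> valid_addr s b"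
  by (induction t a arbitrary: s rule: valid_addr.induct) auto

lemma valid_addr_graft: "valid_addr t a \<Longrightarrow> valid_addr (graft t a s) a"
  using valid_addr_graft_append[of t a s "[]"] by simp

lemma graft_graft_append:
  "valid_addr t a \<Longrightarrow> graft (graft t a s) (a @ b) s' = graft t a (graft s b s')"
  by (induction t a arbitrary: s rule: valid_addr.induct) auto

lemma graft_graft: "valid_addr t a \<Longrightarrow> graft (graft t a s) a s' = graft t a s'"
  using graft_graft_append[of t a s "[]"] by simp

lemma Nil_in_addrs [simp]: "[] \<in> addrs t"
  by (simp add: addrs_def)

lemma addrs_Node: "addrs (Node ts) = insert [] (\<Union>i<length ts. (#) i ` addrs (ts ! i))"
  unfolding addrs_def by (auto simp: neq_Nil_conv) (case_tac x, auto)

lemma finite_addrs [simp]: "finite (addrs t)"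
  by (induction t) (auto simp: addrs_Node)

lemma bij_betw_Node: "bij_betw Node {cs. length cs = k} {d. length (children d) = k}"
  by (rule bij_betw_byWitness[where f' = children]) (auto, metis children.simps ptree.exhaust)

lemma sum_children_addrs: "(\<Sum>a\<in>addrs t. length (children (subtree t a))) = card (addrs t) - 1"
proof -
  let ?S = "SIGMA a:addrs t. {..<length (children (subtree t a))}"
  have "bij_betw (\<lambda>(a, i). a @ [i]) ?S (addrs t - {[]})"
  proof (rule bij_betw_byWitness[where f' = "\<lambda>b. (butlast b, last b)"])
    show "(\<lambda>b. (butlast b, last b)) ` (addrs t - {[]}) \<subseteq> ?S"
      by (auto simp: addrs_def) (metis append_butlast_last_id valid_addr_snoc)+
  qed (auto simp: addrs_def valid_addr_snoc)
  then have "card ?S = card (addrs t) - 1"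
    by (simp add: bij_betw_same_card)
  then show ?thesis
    by (simp add: card_SigmaI)
qed

section \<open>Cutting a rooted tree at its root\<close>

definition desc_tree :: "rtree \<Rightarrow> ptree" where
  "desc_tree x = subtree (fst x) (snd x)"

definition graft_root :: "rtree \<Rightarrow> ptree \<Rightarrow> rtree" where
  "graft_root n d = (graft (fst n) (snd n) d, snd n)"

definition leaf_rooted :: "rtree set" where
  "leaf_rooted = {n. valid_rtree n \<and> desc_tree n = Node []}"

lemma root_degree_eq: "root_degree x = length (children (desc_tree x))"
  by (simp add: root_degree_def desc_tree_def)

lemma nondesc_tree_in_leaf_rooted: "valid_rtree x \<Longrightarrow> nondesc_tree x \<in> leaf_rooted"
  by (auto simp: leaf_rooted_def nondesc_tree_def valid_rtree_def desc_tree_def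
      valid_addr_graft subtree_graft)

lemma graft_root_nondesc_desc: "valid_rtree x \<Longrightarrow> graft_root (nondesc_tree x) (desc_tree x) = x"
  by (auto simp: graft_root_def nondesc_tree_def valid_rtree_def desc_tree_def
      graft_graft graft_subtree)

lemma valid_graft_root: "n \<in> leaf_rooted \<Longrightarrow> valid_rtree (graft_root n d)"
  by (simp add: leaf_rooted_def graft_root_def valid_rtree_def valid_addr_graft)

lemma nondesc_graft_root: "n \<in> leaf_rooted \<Longrightarrow> nondesc_tree (graft_root n d) = n"
  by (cases n) (auto simp: leaf_rooted_def graft_root_def nondesc_tree_def valid_rtree_def
      desc_tree_def graft_graft dest: graft_subtree)

lemma desc_graft_root: "n \<in> leaf_rooted \<Longrightarrow> desc_tree (graft_root n d) = d"
  by (simp add: leaf_rooted_def graft_root_def valid_rtree_def desc_tree_def subtree_graft)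

lemma bij_betw_graft_root:
  "bij_betw (case_prod graft_root) (leaf_rooted \<times> UNIV) {x. valid_rtree x}"
  by (rule bij_betw_byWitness[where f' = "\<lambda>x. (nondesc_tree x, desc_tree x)"])
    (auto simp: nondesc_graft_root desc_graft_root graft_root_nondesc_desc
      valid_graft_root nondesc_tree_in_leaf_rooted)

lemma nn_integral_graft_root:
  "(\<integral>\<^sup>+x. indicator {x. valid_rtree x} x * f x \<partial>count_space UNIV)
   = (\<integral>\<^sup>+n. indicator leaf_rooted n * (\<integral>\<^sup>+d. f (graft_root n d) \<partial>count_space UNIV) \<partial>count_space UNIV)"
proof -
  have "(\<integral>\<^sup>+x. indicator {x. valid_rtree x} x * f x \<partial>count_space UNIV)
      = (\<integral>\<^sup>+x. f x \<partial>count_space {x. valid_rtree x})"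
    by (simp add: nn_integral_count_space_indicator mult.commute)
  also have "\<dots> = (\<integral>\<^sup>+p. f (case_prod graft_root p) \<partial>count_space (leaf_rooted \<times> UNIV))"
    by (rule nn_integral_bij_count_space[OF bij_betw_graft_root, symmetric])
  also have "\<dots> = (\<integral>\<^sup>+p. indicator leaf_rooted (fst p) * f (graft_root (fst p) (snd p)) \<partial>count_space UNIV)"
    by (auto simp: nn_integral_count_space_indicator intro!: nn_integral_cong split: split_indicator)
  also have "\<dots> = (\<integral>\<^sup>+n. indicator leaf_rooted n * (\<integral>\<^sup>+d. f (graft_root n d) \<partial>count_space UNIV) \<partial>count_space UNIV)"
    by (subst nn_integral_fst_count_space[symmetric]) (simp add: nn_integral_cmult)
  finally show ?thesis .
qed

section \<open>Galton-Watson weights\<close>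

fun gw_weight :: "nat pmf \<Rightarrow> ptree \<Rightarrow> real" where
  "gw_weight \<pi> (Node ts) = pmf \<pi> (length ts) * prod_list (map (gw_weight \<pi>) ts)"

fun gw_weight_outside :: "nat pmf \<Rightarrow> ptree \<Rightarrow> nat list \<Rightarrow> real" where
  "gw_weight_outside \<pi> t [] = 1"
| "gw_weight_outside \<pi> (Node ts) (i # a) =
     (if i < length ts then
        pmf \<pi> (length ts) * prod_list (map (gw_weight \<pi>) (take i ts))
        * prod_list (map (gw_weight \<pi>) (drop (Suc i) ts)) * gw_weight_outside \<pi> (ts ! i) a
      else 0)"

lemma gw_weight_nonneg: "0 \<le> gw_weight \<pi> t"
  by (induction t) (auto intro!: prod_list_nonneg mult_nonneg_nonneg)

lemma gw_weight_outside_nonneg: "0 \<le> gw_weight_outside \<pi> t a"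
  by (induction \<pi> t a rule: gw_weight_outside.induct)
    (auto intro!: prod_list_nonneg mult_nonneg_nonneg gw_weight_nonneg)

lemma gw_weight_split:
  "valid_addr t a \<Longrightarrow> gw_weight \<pi> t = gw_weight_outside \<pi> t a * gw_weight \<pi> (subtree t a)"
proof (induction t a rule: valid_addr.induct)
  case (2 ts i a)
  then have "ts = take i ts @ ts ! i # drop (Suc i) ts"
    by (simp add: id_take_nth_drop)
  then have "prod_list (map (gw_weight \<pi>) ts) = prod_list (map (gw_weight \<pi>) (take i ts))
      * gw_weight \<pi> (ts ! i) * prod_list (map (gw_weight \<pi>) (drop (Suc i) ts))"
    by (metis (no_types) list.map(2) map_append mult.assoc prod_list.Cons prod_list.append)
  with 2 show ?case
    by (simp add: ac_simps)
qed simp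

lemma gw_weight_outside_graft:
  "valid_addr t a \<Longrightarrow> gw_weight_outside \<pi> (graft t a s) a = gw_weight_outside \<pi> t a"
  by (induction t a rule: valid_addr.induct) auto

lemma gw_weight_outside_append: "valid_addr t a \<Longrightarrow>
  gw_weight_outside \<pi> t (a @ b) = gw_weight_outside \<pi> t a * gw_weight_outside \<pi> (subtree t a) b"
  by (induction t a rule: valid_addr.induct) auto

lemma gw_weight_graft_root: "n \<in> leaf_rooted \<Longrightarrow>
  gw_weight \<pi> (fst (graft_root n d)) = gw_weight_outside \<pi> (fst n) (snd n) * gw_weight \<pi> d"
  using gw_weight_split[of "graft (fst n) (snd n) d" "snd n" \<pi>]
  by (simp add: leaf_rooted_def valid_rtree_def graft_root_def valid_addr_graft
      gw_weight_outside_graft subtree_graft)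

section \<open>The law of TGWT\<close>

lemma spmf_bind_eq_single:
  assumes "\<And>x. x \<in> set_spmf p \<Longrightarrow> y \<in> set_spmf (f x) \<Longrightarrow> x = c"
  shows "spmf (bind_spmf p f) y = spmf p c * spmf (f c) y"
proof -
  have "ennreal (spmf (bind_spmf p f) y) = (\<integral>\<^sup>+x. ennreal (spmf (f x) y) \<partial>measure_spmf p)"
    by (rule ennreal_spmf_bind)
  also have "\<dots> = (\<integral>\<^sup>+x. ennreal (spmf (f c) y) * indicator {c} x \<partial>measure_spmf p)"
    using assms by (intro nn_integral_cong_AE)
      (auto simp: AE_measure_spmf_iff spmf_eq_0_set_spmf split: split_indicator)
  also have "\<dots> = ennreal (spmf (f c) y) * spmf p c"
    by (simp add: nn_integral_cmult_indicator emeasure_spmf_single)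
  finally show ?thesis
    by (simp add: ennreal_mult'[symmetric] mult.commute)
qed

lemma length_gw_forest: "ts \<in> set_spmf (gw_forest \<pi> k) \<Longrightarrow> length ts = k"
proof (induction arbitrary: k ts rule: gw_forest.fixp_induct)
  case (3 f)
  then show ?case
    by (auto simp: set_bind_spmf set_spmf_bind_pmf split: if_splits)
qed simp_all

lemma gw_forest_0: "gw_forest \<pi> 0 = return_spmf []"
  by (subst gw_forest.simps) simp

lemma spmf_gw_forest_Cons:
  assumes "0 < k"
  shows "spmf (gw_forest \<pi> k) (Node cs # rest)
    = pmf \<pi> (length cs) * spmf (gw_forest \<pi> (length cs)) cs * spmf (gw_forest \<pi> (k - 1)) rest"
proof -
  let ?tail = "\<lambda>cs'. bind_spmf (gw_forest \<pi> (k - 1)) (\<lambda>rest'. return_spmf (Node cs' # rest'))"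
  have "spmf (gw_forest \<pi> k) (Node cs # rest)
      = spmf (bind_spmf (spmf_of_pmf \<pi>) (\<lambda>j. bind_spmf (gw_forest \<pi> j) ?tail)) (Node cs # rest)"
    using assms by (subst gw_forest.simps) (simp del: bind_spmf_of_pmf)
  also have "\<dots> = pmf \<pi> (length cs) * spmf (bind_spmf (gw_forest \<pi> (length cs)) ?tail) (Node cs # rest)"
    by (subst spmf_bind_eq_single[where c = "length cs"])
      (auto simp: set_bind_spmf length_gw_forest)
  also have "spmf (bind_spmf (gw_forest \<pi> (length cs)) ?tail) (Node cs # rest)
      = spmf (gw_forest \<pi> (length cs)) cs * spmf (?tail cs) (Node cs # rest)"
    by (rule spmf_bind_eq_single) (auto simp: set_bind_spmf)
  also have "spmf (?tail cs) (Node cs # rest) = spmf (gw_forest \<pi> (k - 1)) rest"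
    by (subst spmf_bind_eq_single[where c = rest]) auto
  finally show ?thesis
    by (simp only: mult.assoc)
qed

lemma spmf_gw_forest:
  "spmf (gw_forest \<pi> k) ts = (if length ts = k then prod_list (map (gw_weight \<pi>) ts) else 0)"
proof (induction ts arbitrary: k rule: measure_induct_rule[of "size_list size"])
  case (less ts)
  show ?case
  proof (cases ts)
    case Nil
    then show ?thesis
      by (subst gw_forest.simps) (auto simp: spmf_eq_0_set_spmf set_bind_spmf set_spmf_bind_pmf)
  next
    case (Cons t rest)
    moreover obtain cs where "t = Node cs"
      by (cases t)
    ultimately show ?thesis
      using less[of cs] less[of rest]
      by (cases k) (simp_all add: spmf_gw_forest_Cons gw_forest_0)
  qed
qed

lemma spmf_gw: "spmf (gw \<pi>) t = gw_weight \<pi> t"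
proof -
  have singleton: "xs \<in> set_spmf (gw_forest \<pi> 1) \<Longrightarrow> xs = [hd xs]" for xs
    by (drule length_gw_forest) (auto simp: length_Suc_conv)
  have "spmf (gw \<pi>) t = spmf (gw_forest \<pi> 1) [t]"
  proof (cases "[t] \<in> set_spmf (gw_forest \<pi> 1)")
    case True
    have "inj_on hd (set_spmf (gw_forest \<pi> 1))"
      by (metis inj_onI singleton)
    from spmf_map_inj[OF this True] show ?thesis
      by (simp add: gw_def)
  next
    case False
    then have "t \<notin> set_spmf (gw \<pi>)"
      unfolding gw_def using singleton by force
    with False show ?thesis
      by (metis spmf_eq_0_set_spmf)
  qed
  then show ?thesis
    by (simp add: spmf_gw_forest)
qed

lemma mean_enn_eq_mean: "mean_enn \<pi> < \<infinity> \<Longrightarrow> mean_enn \<pi> = ennreal (mean \<pi>)"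
  by (simp add: mean_def less_top[symmetric])

lemma mean_enn_less_top_if_mean_pos: "0 < mean \<pi> \<Longrightarrow> mean_enn \<pi> < \<infinity>"
  unfolding mean_def by (simp add: enn2real_positive_iff)

lemma mean_less_one: "mean_enn \<pi> < 1 \<Longrightarrow> mean \<pi> < 1"
  unfolding mean_def by (metis enn2real_less_iff ennreal_1 less_top order_less_imp_not_less)

lemma mean_nonneg: "0 \<le> mean \<pi>"
  by (simp add: mean_def)

lemma pmf_eq_0_if_mean_eq_0:
  assumes "mean_enn \<pi> < 1" "mean \<pi> = 0" "0 < k"
  shows "pmf \<pi> k = 0"
proof -
  have "mean_enn \<pi> = 0"
    using assms(1,2) mean_enn_eq_mean[of \<pi>] by (simp add: order_less_trans)
  then have "\<forall>j\<in>set_pmf \<pi>. real j = 0"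
    by (simp add: mean_enn_def nn_integral_0_iff_AE AE_measure_pmf_iff)
  with assms(3) show ?thesis
    by (auto simp: set_pmf_eq)
qed

lemma pmf_size_biased:
  assumes "0 < mean \<pi>"
  shows "pmf (size_biased \<pi>) k = real k * pmf \<pi> k / mean \<pi>"
proof -
  have "(\<integral>\<^sup>+k. ennreal (real k * pmf \<pi> k / mean \<pi>) \<partial>count_space UNIV)
      = ennreal (1 / mean \<pi>) * mean_enn \<pi>"
    using assms unfolding mean_enn_def nn_integral_measure_pmf
    by (subst nn_integral_cmult[symmetric])
      (auto intro!: nn_integral_cong simp: ennreal_mult'[symmetric] field_simps)
  also have "\<dots> = 1"
    using assms mean_enn_less_top_if_mean_pos[OF assms]
    by (simp add: mean_enn_eq_mean ennreal_mult'[symmetric])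
  finally show ?thesis
    unfolding size_biased_def using assms by (subst pmf_embed_pmf) auto
qed

lemma set_pmf_size_biased_pos: "0 < mean \<pi> \<Longrightarrow> z \<in> set_pmf (size_biased \<pi>) \<Longrightarrow> 0 < z"
  by (auto simp: set_pmf_iff pmf_size_biased)

lemma set_add_parent:
  assumes "y \<in> set_spmf (add_parent \<pi> x)"
  obtains cs i where "y = (Node cs, i # snd x)" "i < length cs" "cs ! i = fst x"
proof -
  from assms obtain z i before after where
    "i \<in> set_pmf (pmf_of_set {..<z})" "before \<in> set_spmf (gw_forest \<pi> i)"
    "y = (Node (before @ [fst x] @ after), i # snd x)"
    by (auto simp: add_parent_def set_bind_spmf set_spmf_bind_pmf)
  with that show ?thesis
    by (auto dest!: length_gw_forest)
qed

lemma spmf_add_parent: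
  assumes "0 < mean \<pi>" "i < length cs"
  shows "spmf (add_parent \<pi> (cs ! i, b)) (Node cs, i # b)
    = pmf \<pi> (length cs) / mean \<pi> * prod_list (map (gw_weight \<pi>) (take i cs))
      * prod_list (map (gw_weight \<pi>) (drop (Suc i) cs))"
proof -
  let ?L = "length cs" and ?y = "(Node cs, i # b)"
  let ?after = "\<lambda>z i' before. bind_spmf (gw_forest \<pi> (z - 1 - i'))
        (\<lambda>after. return_spmf (Node (before @ [cs ! i] @ after), i' # b))"
  let ?before = "\<lambda>z i'. bind_spmf (gw_forest \<pi> i') (?after z i')"
  have "spmf (add_parent \<pi> (cs ! i, b)) ?y
      = pmf (size_biased \<pi>) ?L * spmf (bind_spmf (spmf_of_pmf (pmf_of_set {..<?L})) (?before ?L)) ?y"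
    unfolding add_parent_def
    using set_pmf_size_biased_pos[OF assms(1)] lessThan_empty_iff
    by (subst spmf_bind_eq_single[where c = ?L])
      (auto simp: set_bind_spmf simp del: bind_spmf_of_pmf dest!: length_gw_forest
        dest: arg_cong[where f = length])
  also have "spmf (bind_spmf (spmf_of_pmf (pmf_of_set {..<?L})) (?before ?L)) ?y
      = pmf (pmf_of_set {..<?L}) i * spmf (?before ?L i) ?y"
    by (subst spmf_bind_eq_single[where c = i]) (auto simp: set_bind_spmf simp del: bind_spmf_of_pmf)
  also have "spmf (?before ?L i) ?y
      = prod_list (map (gw_weight \<pi>) (take i cs)) * spmf (?after ?L i (take i cs)) ?y"
    by (subst spmf_bind_eq_single[where c = "take i cs"])
      (auto simp: set_bind_spmf spmf_gw_forest assms(2) dest!: length_gw_forest,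
        metis append_eq_conv_conj)
  also have "spmf (?after ?L i (take i cs)) ?y = prod_list (map (gw_weight \<pi>) (drop (Suc i) cs))"
    by (subst spmf_bind_eq_single[where c = "drop (Suc i) cs"])
      (auto simp: spmf_gw_forest assms(2) id_take_nth_drop[symmetric],
        metis assms(2) id_take_nth_drop list.inject same_append_eq)
  also have "pmf (pmf_of_set {..<?L}) i = 1 / ?L"
    using assms(2) by (subst pmf_of_set) auto
  finally show ?thesis
    using assms by (auto simp: pmf_size_biased)
qed

lemma set_ancestral_line:
  "y \<in> set_spmf (ancestral_line \<pi> x)
    \<Longrightarrow> \<exists>p. snd y = p @ snd x \<and> valid_addr (fst y) p \<and> subtree (fst y) p = fst x"
proof (induction arbitrary: x y rule: ancestral_line.fixp_induct)
  case (3 f)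
  consider "y = x" | x' where "x' \<in> set_spmf (add_parent \<pi> x)" "y \<in> set_spmf (f \<pi> x')"
    using "3.prems" by (auto simp: set_bind_spmf set_spmf_bind_pmf split: if_splits)
  then show ?case
  proof cases
    case 1
    then show ?thesis
      by (intro exI[of _ "[]"]) simp
  next
    case 2
    obtain cs i where "x' = (Node cs, i # snd x)" "i < length cs" "cs ! i = fst x"
      using 2(1) by (rule set_add_parent)
    moreover obtain p where "snd y = p @ snd x'" "valid_addr (fst y) p" "subtree (fst y) p = fst x'"
      using "3.IH"[OF 2(2)] by blast
    ultimately show ?thesis
      by (intro exI[of _ "p @ [i]"]) (simp add: valid_addr_snoc subtree_append)
  qed
qed simp_all

lemma mean_mult_spmf_add_parent:
  assumes "mean_enn \<pi> < 1" "i < length cs"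
  shows "mean \<pi> * spmf (add_parent \<pi> (cs ! i, b)) (Node cs, i # b) = gw_weight_outside \<pi> (Node cs) [i]"
proof (cases "mean \<pi> = 0")
  case True
  with assms show ?thesis
    using pmf_eq_0_if_mean_eq_0[OF assms(1) True, of "length cs"] by (cases cs) auto
next
  case False
  with assms show ?thesis
    using mean_nonneg[of \<pi>] by (simp add: spmf_add_parent)
qed

lemma spmf_ancestral_line_unfold:
  assumes "mean_enn \<pi> < 1"
  shows "spmf (ancestral_line \<pi> x) y
    = mean \<pi> * spmf (bind_spmf (add_parent \<pi> x) (ancestral_line \<pi>)) y
      + (1 - mean \<pi>) * spmf (return_spmf x) y"
  using mean_less_one[OF assms]
  by (subst ancestral_line.simps) (simp add: spmf_bind mean_def del: bind_spmf_of_pmf)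

lemma spmf_ancestral_line:
  assumes "mean_enn \<pi> < 1"
  shows "spmf (ancestral_line \<pi> (s, b)) (t, p @ b)
    = (if valid_addr t p \<and> subtree t p = s then (1 - mean \<pi>) * gw_weight_outside \<pi> t p else 0)"
proof (induction p arbitrary: s b rule: rev_induct)
  case Nil
  have "spmf (bind_spmf (add_parent \<pi> (s, b)) (ancestral_line \<pi>)) (t, b) = 0"
    by (auto simp: spmf_eq_0_set_spmf set_bind_spmf elim!: set_add_parent dest!: set_ancestral_line)
  then show ?case
    by (simp add: spmf_ancestral_line_unfold[OF assms])
next
  case (snoc i p)
  let ?y = "(t, p @ i # b)" and ?x = "(subtree t p, i # b)"
  have "spmf (bind_spmf (add_parent \<pi> (s, b)) (ancestral_line \<pi>)) ?y
      = spmf (add_parent \<pi> (s, b)) ?x * spmf (ancestral_line \<pi> ?x) ?y"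
  proof (rule spmf_bind_eq_single)
    fix x' assume "x' \<in> set_spmf (add_parent \<pi> (s, b))" "?y \<in> set_spmf (ancestral_line \<pi> x')"
    then obtain cs j q where "x' = (Node cs, j # b)" "(p @ [i]) @ b = (q @ [j]) @ b" "subtree t q = Node cs"
      by (auto elim!: set_add_parent dest!: set_ancestral_line)
    then show "x' = ?x"
      by auto
  qed
  then have step: "spmf (ancestral_line \<pi> (s, b)) ?y
      = mean \<pi> * spmf (add_parent \<pi> (s, b)) ?x
        * (if valid_addr t p then (1 - mean \<pi>) * gw_weight_outside \<pi> t p else 0)"
    using snoc.IH[of "subtree t p" "i # b"]
    by (simp add: spmf_ancestral_line_unfold[OF assms, of "(s, b)"])
  show ?case
  proof (cases "valid_addr t (p @ [i]) \<and> subtree t (p @ [i]) = s")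
    case True
    obtain cs where cs: "subtree t p = Node cs"
      by (cases "subtree t p")
    with True have "valid_addr t p" "i < length cs" "s = cs ! i"
      by (auto simp: valid_addr_snoc subtree_append)
    with True step show ?thesis
      by (simp add: cs gw_weight_outside_append mean_mult_spmf_add_parent[OF assms])
  next
    case False
    then have "?x \<notin> set_spmf (add_parent \<pi> (s, b)) \<or> \<not> valid_addr t p"
      by (auto elim!: set_add_parent simp: valid_addr_snoc subtree_append)
    with False step show ?thesis
      by (auto simp: spmf_eq_0_set_spmf)
  qed
qed

lemma spmf_TGWT:
  assumes "mean_enn \<pi> < 1"
  shows "spmf (TGWT \<pi>) (t, a) = (if valid_addr t a then (1 - mean \<pi>) * gw_weight \<pi> t else 0)"
proof -
  have AL: "spmf (ancestral_line \<pi> (s, [])) (t, a)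
      = (if valid_addr t a \<and> subtree t a = s then (1 - mean \<pi>) * gw_weight_outside \<pi> t a else 0)" for s
    using spmf_ancestral_line[OF assms, of s "[]" t a] by simp
  have "spmf (TGWT \<pi>) (t, a)
      = spmf (gw \<pi>) (subtree t a) * spmf (ancestral_line \<pi> (subtree t a, [])) (t, a)"
    unfolding TGWT_def
    by (rule spmf_bind_eq_single) (auto simp: in_set_spmf_iff_spmf AL split: if_splits)
  then show ?thesis
    by (simp add: AL spmf_gw gw_weight_split[of t a])
qed

section \<open>Unimodularity\<close>

lemma nn_integral_tree_only_pmf:
  assumes "\<And>x. pmf P x = (if valid_rtree x then q (fst x) else 0)"
  shows "(\<integral>\<^sup>+x. f x \<partial>measure_pmf P)
    = (\<integral>\<^sup>+t. ennreal (q t) * (\<Sum>a\<in>addrs t. f (t, a)) \<partial>count_space UNIV)"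
proof -
  have "(\<integral>\<^sup>+a. ennreal (pmf P (t, a)) * f (t, a) \<partial>count_space UNIV)
      = ennreal (q t) * (\<Sum>a\<in>addrs t. f (t, a))" for t
  proof -
    have "(\<integral>\<^sup>+a. ennreal (pmf P (t, a)) * f (t, a) \<partial>count_space UNIV)
        = (\<integral>\<^sup>+a. ennreal (q t) * f (t, a) \<partial>count_space (addrs t))"
      by (auto simp: nn_integral_count_space_indicator assms valid_rtree_def addrs_def
          intro!: nn_integral_cong split: split_indicator)
    then show ?thesis
      by (simp add: nn_integral_count_space_finite sum_distrib_left)
  qed
  then show ?thesis
    by (simp add: nn_integral_measure_pmf nn_integral_fst_count_space[symmetric])
qed

lemma unimodular_pmf_reroot:
  assumes "unimodular P" "a \<in> addrs t" "b \<in> addrs t"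
  shows "pmf P (t, a) = pmf P (t, b)"
proof -
  define h where "h t' a' b' = (if (t', a', b') = (t, a, b) then 1 else 0 :: ennreal)" for t' a' b'
  have "(\<integral>\<^sup>+x. (\<Sum>u\<in>addrs (fst x). h (fst x) (snd x) u) \<partial>measure_pmf P)
      = (\<integral>\<^sup>+x. (\<Sum>u\<in>addrs (fst x). h (fst x) u (snd x)) \<partial>measure_pmf P)"
    using assms(1) unfolding unimodular_def by blast
  moreover have "(\<Sum>u\<in>addrs (fst x). h (fst x) (snd x) u) = indicator {(t, a)} x"
    and "(\<Sum>u\<in>addrs (fst x). h (fst x) u (snd x)) = indicator {(t, b)} x" for x
    using assms(2,3) by (auto simp: h_def split: split_indicator)
  ultimately show ?thesis
    by (simp add: emeasure_pmf_single)
qed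

lemma unimodular_iff_tree_only_pmf:
  assumes "\<forall>x\<in>set_pmf P. valid_rtree x"
  shows "unimodular P \<longleftrightarrow> (\<exists>q. \<forall>x. pmf P x = (if valid_rtree x then q (fst x) else 0))"
proof
  assume U: "unimodular P"
  have "pmf P x = (if valid_rtree x then pmf P (fst x, []) else 0)" for x
    using assms unimodular_pmf_reroot[OF U, of "snd x" "fst x" "[]"]
    by (cases x) (auto simp: valid_rtree_def addrs_def pmf_eq_0_set_pmf simp del: Nil_in_addrs)
  then show "\<exists>q. \<forall>x. pmf P x = (if valid_rtree x then q (fst x) else 0)"
    by (intro exI[of _ "\<lambda>t. pmf P (t, [])"] allI)
next
  assume "\<exists>q. \<forall>x. pmf P x = (if valid_rtree x then q (fst x) else 0)"
  then obtain q where q: "\<And>x. pmf P x = (if valid_rtree x then q (fst x) else 0)"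
    by blast
  show "unimodular P"
    unfolding unimodular_def
  proof (intro allI)
    fix h :: "ptree \<Rightarrow> nat list \<Rightarrow> nat list \<Rightarrow> ennreal"
    have "(\<Sum>a\<in>addrs t. \<Sum>u\<in>addrs t. h t a u) = (\<Sum>a\<in>addrs t. \<Sum>u\<in>addrs t. h t u a)" for t
      by (rule sum.swap)
    then show "(\<integral>\<^sup>+x. (\<Sum>u\<in>addrs (fst x). h (fst x) (snd x) u) \<partial>measure_pmf P)
        = (\<integral>\<^sup>+x. (\<Sum>u\<in>addrs (fst x). h (fst x) u (snd x)) \<partial>measure_pmf P)"
      by (simp add: nn_integral_tree_only_pmf[OF q])
  qed
qed

section \<open>Independence of the root degree and the non-descendant tree\<close>

lemma indep_rvI_product:
  assumes "\<And>A B. emeasure (measure_pmf P) {x. f x \<in> A \<and> g x \<in> B} = F A * G B"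
  shows "indep_rv P f g"
  unfolding indep_rv_def
proof (intro allI)
  fix A B
  have "emeasure (measure_pmf P) {x. f x \<in> A \<and> g x \<in> B} = F A * G B * (F UNIV * G UNIV)"
    using assms[of UNIV UNIV] by (simp add: assms measure_pmf.emeasure_space_1)
  also have "\<dots> = emeasure (measure_pmf P) {x. f x \<in> A} * emeasure (measure_pmf P) {x. g x \<in> B}"
    using assms[of A UNIV] assms[of UNIV B] by (simp add: ac_simps)
  finally show "measure_pmf.prob P {x. f x \<in> A \<and> g x \<in> B}
      = measure_pmf.prob P {x. f x \<in> A} * measure_pmf.prob P {x. g x \<in> B}"
    by (simp add: measure_pmf.emeasure_eq_measure ennreal_mult'[symmetric])
qed

lemma indep_rv_compose: "indep_rv P f g \<Longrightarrow> indep_rv P (\<lambda>x. h (f x)) (\<lambda>x. k (g x))"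
  unfolding indep_rv_def
proof (intro allI)
  fix A B
  assume "\<forall>A B. measure_pmf.prob P {x. f x \<in> A \<and> g x \<in> B}
    = measure_pmf.prob P {x. f x \<in> A} * measure_pmf.prob P {x. g x \<in> B}"
  from this[rule_format, of "h -` A" "k -` B"]
  show "measure_pmf.prob P {x. h (f x) \<in> A \<and> k (g x) \<in> B}
      = measure_pmf.prob P {x. h (f x) \<in> A} * measure_pmf.prob P {x. k (g x) \<in> B}"
    by simp
qed

lemma emeasure_nondesc_desc:
  assumes "\<And>x. \<not> valid_rtree x \<Longrightarrow> pmf P x = 0"
  shows "emeasure (measure_pmf P) {x. nondesc_tree x \<in> B \<and> desc_tree x \<in> A}
    = (\<integral>\<^sup>+n. indicator (leaf_rooted \<inter> B) n
         * (\<integral>\<^sup>+d. ennreal (pmf P (graft_root n d)) * indicator A d \<partial>count_space UNIV) \<partial>count_space UNIV)"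
proof -
  let ?S = "{x. nondesc_tree x \<in> B \<and> desc_tree x \<in> A}"
  have "emeasure (measure_pmf P) ?S = (\<integral>\<^sup>+x. ennreal (pmf P x) * indicator ?S x \<partial>count_space UNIV)"
    by (simp add: nn_integral_measure_pmf[symmetric])
  also have "\<dots>
      = (\<integral>\<^sup>+x. indicator {x. valid_rtree x} x * (ennreal (pmf P x) * indicator ?S x) \<partial>count_space UNIV)"
    using assms by (intro nn_integral_cong) (auto split: split_indicator)
  also have "\<dots> = (\<integral>\<^sup>+n. indicator (leaf_rooted \<inter> B) n
         * (\<integral>\<^sup>+d. ennreal (pmf P (graft_root n d)) * indicator A d \<partial>count_space UNIV) \<partial>count_space UNIV)"
    by (auto simp: nn_integral_graft_root nondesc_graft_root desc_graft_root
        intro!: nn_integral_cong split: split_indicator)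
  finally show ?thesis .
qed

lemma indep_rv_desc_nondesc_if_product:
  assumes "\<And>x. \<not> valid_rtree x \<Longrightarrow> pmf P x = 0"
    and "\<And>n d. n \<in> leaf_rooted \<Longrightarrow> pmf P (graft_root n d) = F n * G d"
    and "\<And>n. 0 \<le> F n" "\<And>d. 0 \<le> G d"
  shows "indep_rv P desc_tree nondesc_tree"
proof (rule indep_rvI_product)
  fix A B
  have "emeasure (measure_pmf P) {x. desc_tree x \<in> A \<and> nondesc_tree x \<in> B}
      = (\<integral>\<^sup>+n. indicator (leaf_rooted \<inter> B) n
         * (ennreal (F n) * (\<integral>\<^sup>+d. ennreal (G d) * indicator A d \<partial>count_space UNIV)) \<partial>count_space UNIV)"
    using emeasure_nondesc_desc[OF assms(1), of B A] assms(2-4)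
    by (auto simp: conj_commute ennreal_mult' mult.assoc nn_integral_cmult[symmetric]
        intro!: nn_integral_cong split: split_indicator)
  also have "\<dots> = (\<integral>\<^sup>+n. indicator (leaf_rooted \<inter> B) n * ennreal (F n) \<partial>count_space UNIV)
      * (\<integral>\<^sup>+d. ennreal (G d) * indicator A d \<partial>count_space UNIV)"
    by (subst nn_integral_multc[symmetric]) (simp_all add: mult.assoc)
  finally show "emeasure (measure_pmf P) {x. desc_tree x \<in> A \<and> nondesc_tree x \<in> B}
      = (\<lambda>A. \<integral>\<^sup>+d. ennreal (G d) * indicator A d \<partial>count_space UNIV) A
        * (\<lambda>B. \<integral>\<^sup>+n. indicator (leaf_rooted \<inter> B) n * ennreal (F n) \<partial>count_space UNIV) B"
    by (simp add: mult.commute)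
qed

lemma TGWT_imp_unimodular_indep:
  assumes "mean_enn \<pi> < 1" "spmf_of_pmf P = TGWT \<pi>"
  shows "unimodular P \<and> indep_rv P root_degree nondesc_tree"
proof -
  have P: "pmf P x = (if valid_rtree x then (1 - mean \<pi>) * gw_weight \<pi> (fst x) else 0)" for x
    using spmf_TGWT[OF assms(1), of "fst x" "snd x"] assms(2)
    by (metis spmf_spmf_of_pmf prod.collapse valid_rtree_def)
  then have "\<forall>x\<in>set_pmf P. valid_rtree x"
    by (metis set_pmf_iff)
  with P have "unimodular P"
    by (auto simp: unimodular_iff_tree_only_pmf)
  moreover have "indep_rv P desc_tree nondesc_tree"
    using mean_less_one[OF assms(1)]
    by (intro indep_rv_desc_nondesc_if_product[where G = "gw_weight \<pi>"
          and F = "\<lambda>n. (1 - mean \<pi>) * gw_weight_outside \<pi> (fst n) (snd n)"])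
      (simp_all add: P valid_graft_root gw_weight_graft_root gw_weight_nonneg gw_weight_outside_nonneg)
  then have "indep_rv P root_degree nondesc_tree"
    using indep_rv_compose[where h = "\<lambda>d. length (children d)" and k = id]
    by (simp add: root_degree_eq[abs_def])
  ultimately show ?thesis ..
qed

section \<open>Unimodular laws with independent root degree\<close>

lemma nn_integral_count_space_length_Suc:
  "(\<integral>\<^sup>+xs. f xs \<partial>count_space {xs. length xs = Suc n})
    = (\<integral>\<^sup>+xs. (\<integral>\<^sup>+x. f (xs @ [x]) \<partial>count_space UNIV) \<partial>count_space {xs. length xs = n})"
proof -
  have bij: "bij_betw (\<lambda>(xs, x). xs @ [x]) ({xs. length xs = n} \<times> UNIV) {xs. length xs = Suc n}"
    by (rule bij_betw_byWitness[where f' = "\<lambda>xs. (butlast xs, last xs)"])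
      (auto simp: length_Suc_conv_rev)
  have "(\<integral>\<^sup>+xs. (\<integral>\<^sup>+x. f (xs @ [x]) \<partial>count_space UNIV) \<partial>count_space {xs. length xs = n})
      = (\<integral>\<^sup>+xs. \<integral>\<^sup>+x. f (xs @ [x]) * indicator {xs. length xs = n} xs \<partial>count_space UNIV \<partial>count_space UNIV)"
    by (simp add: nn_integral_count_space_indicator nn_integral_multc)
  also have "\<dots> = (\<integral>\<^sup>+p. f (fst p @ [snd p]) * indicator {xs. length xs = n} (fst p) \<partial>count_space UNIV)"
    by (subst nn_integral_fst_count_space[symmetric]) simp
  also have "\<dots> = (\<integral>\<^sup>+p. f (case_prod (\<lambda>xs x. xs @ [x]) p) \<partial>count_space ({xs. length xs = n} \<times> UNIV))"
    by (auto simp: nn_integral_count_space_indicator intro!: nn_integral_cong split: split_indicator)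
  also have "\<dots> = (\<integral>\<^sup>+xs. f xs \<partial>count_space {xs. length xs = Suc n})"
    by (rule nn_integral_bij_count_space[OF bij])
  finally show ?thesis ..
qed

lemma leaf_rooted_graft_child:
  fixes cs us :: "ptree list"
  assumes "(s, a) \<in> leaf_rooted"
  defines "n \<equiv> (graft s a (Node (cs @ Node [] # us)), a @ [length cs])"
  shows "n \<in> leaf_rooted" "fst (graft_root n d) = graft s a (Node (cs @ d # us))"
  using assms
  by (auto simp: leaf_rooted_def valid_rtree_def desc_tree_def graft_root_def valid_addr_graft_append
      subtree_append subtree_graft graft_graft_append list_update_append)

lemma emeasure_nondesc_desc_tree_only:
  assumes q: "\<And>x. pmf P x = (if valid_rtree x then q (fst x) else 0)" and n: "n \<in> leaf_rooted"
  shows "emeasure (measure_pmf P) {x. nondesc_tree x = n \<and> desc_tree x \<in> A}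
    = (\<integral>\<^sup>+d. ennreal (q (fst (graft_root n d))) * indicator A d \<partial>count_space UNIV)"
proof -
  let ?g = "\<lambda>n. \<integral>\<^sup>+d. ennreal (pmf P (graft_root n d)) * indicator A d \<partial>count_space UNIV"
  have "emeasure (measure_pmf P) {x. nondesc_tree x \<in> {n} \<and> desc_tree x \<in> A}
      = (\<integral>\<^sup>+n'. indicator (leaf_rooted \<inter> {n}) n' * ?g n' \<partial>count_space UNIV)"
    using q by (intro emeasure_nondesc_desc) simp
  also have "\<dots> = (\<integral>\<^sup>+n'. ?g n' * indicator {n} n' \<partial>count_space UNIV)"
    using n by (intro nn_integral_cong) (simp split: split_indicator)
  finally show ?thesis
    using n by (simp add: q valid_graft_root)
qed

lemma emeasure_nondesc_tree_only:
  assumes "\<And>x. pmf P x = (if valid_rtree x then q (fst x) else 0)" "n \<in> leaf_rooted"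
  shows "emeasure (measure_pmf P) {x. nondesc_tree x = n}
    = (\<integral>\<^sup>+d. ennreal (q (fst (graft_root n d))) \<partial>count_space UNIV)"
  using emeasure_nondesc_desc_tree_only[OF assms, of UNIV] by simp

lemma nn_integral_root_degree_tree_only:
  assumes q: "\<And>x. pmf P x = (if valid_rtree x then q (fst x) else 0)"
    and indep: "indep_rv P root_degree nondesc_tree" and n: "n \<in> leaf_rooted"
  shows "(\<integral>\<^sup>+d. ennreal (q (fst (graft_root n d))) \<partial>count_space {d. length (children d) = k})
    = pmf (map_pmf root_degree P) k * emeasure (measure_pmf P) {x. nondesc_tree x = n}"
proof -
  have "(\<integral>\<^sup>+d. ennreal (q (fst (graft_root n d))) \<partial>count_space {d. length (children d) = k})
      = emeasure (measure_pmf P) {x. nondesc_tree x = n \<and> desc_tree x \<in> {d. length (children d) = k}}"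
    by (subst emeasure_nondesc_desc_tree_only[OF q n]) (simp add: nn_integral_count_space_indicator)
  also have "\<dots> = emeasure (measure_pmf P) {x. root_degree x \<in> {k} \<and> nondesc_tree x \<in> {n}}"
    by (simp add: root_degree_eq conj_commute)
  also have "\<dots> = measure_pmf.prob P {x. root_degree x \<in> {k}} * measure_pmf.prob P {x. nondesc_tree x \<in> {n}}"
    using indep[unfolded indep_rv_def, rule_format, of "{k}" "{n}"]
    by (simp add: measure_pmf.emeasure_eq_measure ennreal_mult')
  also have "\<dots> = pmf (map_pmf root_degree P) k * emeasure (measure_pmf P) {x. nondesc_tree x = n}"
    by (simp add: pmf_map vimage_def measure_pmf.emeasure_eq_measure ennreal_mult')
  finally show ?thesis .
qed

lemma nn_integral_children_factor:
  assumes q: "\<And>x. pmf P x = (if valid_rtree x then q (fst x) else 0)"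
    and n: "(s, a) \<in> leaf_rooted"
    and factor: "\<forall>u\<in>set us. \<forall>n\<in>leaf_rooted. ennreal (q (fst (graft_root n u)))
      = ennreal (gw_weight \<pi> u) * emeasure (measure_pmf P) {x. nondesc_tree x = n}"
  shows "(\<integral>\<^sup>+cs. ennreal (q (graft s a (Node (cs @ us)))) \<partial>count_space {cs. length cs = j})
    = ennreal (prod_list (map (gw_weight \<pi>) us))
      * (\<integral>\<^sup>+cs. ennreal (q (graft s a (Node cs))) \<partial>count_space {cs. length cs = j + length us})"
  using factor
proof (induction us arbitrary: j)
  case Nil
  then show ?case
    by simp
next
  case (Cons u us)
  have "ennreal (q (graft s a (Node (cs @ u # us))))
      = ennreal (gw_weight \<pi> u) * (\<integral>\<^sup>+D. ennreal (q (graft s a (Node ((cs @ [D]) @ us)))) \<partial>count_space UNIV)"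
    for cs
  proof -
    let ?n = "(graft s a (Node (cs @ Node [] # us)), a @ [length cs])"
    \<comment> \<open>the non-descendant tree of the child of \<open>o\<close> carrying \<open>u\<close>;
      moving the root there keeps the mass\<close>
    have "ennreal (q (fst (graft_root ?n u)))
        = ennreal (gw_weight \<pi> u) * emeasure (measure_pmf P) {x. nondesc_tree x = ?n}"
      using Cons.prems leaf_rooted_graft_child(1)[OF n] by simp
    then show ?thesis
      by (simp add: emeasure_nondesc_tree_only[OF q leaf_rooted_graft_child(1)[OF n]]
          leaf_rooted_graft_child(2)[OF n])
  qed
  then have "(\<integral>\<^sup>+cs. ennreal (q (graft s a (Node (cs @ u # us)))) \<partial>count_space {cs. length cs = j})
      = ennreal (gw_weight \<pi> u)
        * (\<integral>\<^sup>+cs. ennreal (q (graft s a (Node (cs @ us)))) \<partial>count_space {cs. length cs = Suc j})"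
    by (simp add: nn_integral_count_space_length_Suc nn_integral_cmult)
  also have "\<dots> = ennreal (prod_list (map (gw_weight \<pi>) (u # us)))
      * (\<integral>\<^sup>+cs. ennreal (q (graft s a (Node cs))) \<partial>count_space {cs. length cs = j + length (u # us)})"
    using Cons by (simp add: ennreal_mult' gw_weight_nonneg prod_list_nonneg mult.assoc)
  finally show ?case
    by simp
qed

lemma tree_only_pmf_graft_root_factor:
  assumes q: "\<And>x. pmf P x = (if valid_rtree x then q (fst x) else 0)"
    and indep: "indep_rv P root_degree nondesc_tree"
  shows "n \<in> leaf_rooted \<Longrightarrow> ennreal (q (fst (graft_root n d)))
    = ennreal (gw_weight (map_pmf root_degree P) d) * emeasure (measure_pmf P) {x. nondesc_tree x = n}"
proof (induction d arbitrary: n)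
  case (Node ds)
  obtain s a where n: "n = (s, a)"
    by (cases n)
  let ?\<pi> = "map_pmf root_degree P" and ?k = "length ds"
  have "ennreal (q (fst (graft_root n (Node ds))))
      = (\<integral>\<^sup>+cs. ennreal (q (graft s a (Node (cs @ ds)))) \<partial>count_space {cs. length cs = 0})"
    by (simp add: n graft_root_def nn_integral_count_space_finite)
  also have "\<dots> = ennreal (prod_list (map (gw_weight ?\<pi>) ds))
      * (\<integral>\<^sup>+cs. ennreal (q (graft s a (Node cs))) \<partial>count_space {cs. length cs = ?k})"
    using nn_integral_children_factor[OF q, of s a ds ?\<pi> 0] Node by (simp add: n)
  also have "(\<integral>\<^sup>+cs. ennreal (q (graft s a (Node cs))) \<partial>count_space {cs. length cs = ?k})
      = (\<integral>\<^sup>+cs. ennreal (q (fst (graft_root n (Node cs)))) \<partial>count_space {cs. length cs = ?k})"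
    by (simp add: n graft_root_def)
  also have "\<dots> = (\<integral>\<^sup>+d. ennreal (q (fst (graft_root n d))) \<partial>count_space {d. length (children d) = ?k})"
    by (rule nn_integral_bij_count_space[OF bij_betw_Node])
  also have "\<dots> = pmf ?\<pi> ?k * emeasure (measure_pmf P) {x. nondesc_tree x = n}"
    by (rule nn_integral_root_degree_tree_only[OF q indep Node.prems])
  finally show ?case
    by (simp add: ennreal_mult' gw_weight_nonneg prod_list_nonneg ac_simps)
qed

lemma mean_root_degree_add_top_mass:
  assumes q: "\<And>x. pmf P x = (if valid_rtree x then q (fst x) else 0)"
  shows "mean_enn (map_pmf root_degree P) + (\<integral>\<^sup>+t. ennreal (q t) \<partial>count_space UNIV) = 1"
proof -
  have card: "card (addrs t) = Suc (card (addrs t) - 1)" for t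
    using card_gt_0_iff[of "addrs t"] Nil_in_addrs[of t] by fastforce
  have "mean_enn (map_pmf root_degree P) = (\<integral>\<^sup>+x. ennreal (real (root_degree x)) \<partial>measure_pmf P)"
    by (simp add: mean_enn_def)
  also have "\<dots> = (\<integral>\<^sup>+t. ennreal (q t) * of_nat (card (addrs t) - 1) \<partial>count_space UNIV)"
    by (simp add: nn_integral_tree_only_pmf[OF q] root_degree_def sum_children_addrs
        ennreal_of_nat_eq_real_of_nat[symmetric] of_nat_sum[symmetric] del: of_nat_sum)
  finally have "mean_enn (map_pmf root_degree P) + (\<integral>\<^sup>+t. ennreal (q t) \<partial>count_space UNIV)
      = (\<integral>\<^sup>+t. ennreal (q t) * of_nat (card (addrs t)) \<partial>count_space UNIV)"
    by (subst card) (simp add: nn_integral_add[symmetric] distrib_left add.commute)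
  also have "\<dots> = (\<integral>\<^sup>+x. 1 \<partial>measure_pmf P)"
    by (subst nn_integral_tree_only_pmf[OF q]) simp
  finally show ?thesis
    by simp
qed

lemma unimodular_indep_imp_TGWT:
  assumes valid: "\<forall>x\<in>set_pmf P. valid_rtree x" and "unimodular P"
    and indep: "indep_rv P root_degree nondesc_tree"
  shows "\<exists>\<pi>. mean_enn \<pi> < 1 \<and> spmf_of_pmf P = TGWT \<pi>"
proof -
  obtain q where q: "\<And>x. pmf P x = (if valid_rtree x then q (fst x) else 0)"
    using assms(1,2) unimodular_iff_tree_only_pmf by blast
  have q_nonneg: "0 \<le> q t" for t
    using q[of "(t, [])"] pmf_nonneg[of P "(t, [])"] by (simp add: valid_rtree_def)
  define \<pi> where "\<pi> = map_pmf root_degree P"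
  define c where "c = (\<integral>\<^sup>+t. ennreal (q t) \<partial>count_space UNIV)"
  \<comment> \<open>the probability that the root is the top\<close>
  have root: "(Node [], []) \<in> leaf_rooted"
    by (simp add: leaf_rooted_def valid_rtree_def desc_tree_def)
  have q_factor: "ennreal (q t) = ennreal (gw_weight \<pi> t) * c" for t
    using tree_only_pmf_graft_root_factor[OF q indep root, of t] emeasure_nondesc_tree_only[OF q root]
    by (simp add: \<pi>_def c_def graft_root_def)
  have mean_c: "mean_enn \<pi> + c = 1"
    using mean_root_degree_add_top_mass[OF q] by (simp add: \<pi>_def c_def)
  have "c \<noteq> 0"
  proof
    assume "c = 0"
    then have "pmf P x = 0" for x
      using q_factor[of "fst x"] q_nonneg[of "fst x"] by (simp add: q)
    then show False
      using set_pmf_not_empty[of P] by (auto simp: set_pmf_iff)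
  qed
  with mean_c have mean: "mean_enn \<pi> < 1"
    by (metis ennreal_add_left_cancel ennreal_one_less_top group_cancel.rule0 le_iff_add less_le)
  then have "ennreal (mean \<pi>) + c = 1"
    using mean_c mean_enn_eq_mean[of \<pi>] by (simp add: order_less_trans)
  then have "c = 1 - ennreal (mean \<pi>)"
    using ennreal_add_diff_cancel_left[of "ennreal (mean \<pi>)" c] by simp
  then have "c = ennreal (1 - mean \<pi>)"
    by (simp add: ennreal_minus[symmetric] mean_nonneg)
  then have "pmf P x = spmf (TGWT \<pi>) x" for x
    using q_factor[of "fst x"] q_nonneg[of "fst x"] mean_less_one[OF mean]
    by (cases x) (simp add: q spmf_TGWT[OF mean] valid_rtree_def ennreal_mult'[symmetric]
        gw_weight_nonneg mult.commute)
  with mean show ?thesis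
    by (auto intro!: spmf_eqI)
qed

theorem proposition4p19:
  fixes P :: "rtree pmf"
  assumes "\<forall>x\<in>set_pmf P. valid_rtree x"
  shows "(\<exists>\<pi> :: nat pmf. mean_enn \<pi> < 1 \<and> spmf_of_pmf P = TGWT \<pi>)
     \<longleftrightarrow> (unimodular P \<and>
          indep_rv P root_degree nondesc_tree)"
  using TGWT_imp_unimodular_indep unimodular_indep_imp_TGWT[OF assms] by blast

end
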